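(* Let $a\in[0,\infty)$ and let $t:[0,1]\to[0,\infty]$ and $s:[0,\infty]\to[0,1]$ be continuous and increasing functions such that (1) $t(x)=\infty$ if and only if $x=1$; (2) $t(x)=\frac{a}{2}$ if and only if $x=0$; (3) $s(x)=0$ if and only if $x\in[0,a]$; (4) $s(x)=1$ if and only if $x=\infty$. Then the function $G_{t,s}:[0,1]^2\to[0,1]$ defined by $G_{t,s}(x,y)=s(t(x)+t(y))$ is a grouping function.
   Context: "Increasing" means non-decreasing. Arithmetic in $[0,\infty]$ uses $c+\infty=\infty$; continuity on $[0,\infty]$ refers to the usual topology of the extended half-line. A grouping function is a map $G:[0,1]^2\to[0,1]$ that is (G1) commutative, (G2) $G(x,y)=0$ iff $x=y=0$, (G3) $G(x,y)=1$ iff $x=1$ or $y=1$, (G4) increasing in each variable, (G5) continuous. *)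

theory Defs
  imports "HOL-Analysis.Analysis" "HOL-Library.Extended_Nonnegative_Real"
begin

text \<open>The extended half-line [0,\<infinity>] is modelled by ennreal.
  A grouping function on the unit square, relativised to [0,1]^2.\<close>

definition grouping_function :: "(real \<Rightarrow> real \<Rightarrow> real) \<Rightarrow> bool" where
  "grouping_function G \<longleftrightarrow>
     (\<forall>x\<in>{0..1}. \<forall>y\<in>{0..1}. G x y \<in> {0..1}) \<and>
     (\<forall>x\<in>{0..1}. \<forall>y\<in>{0..1}. G x y = G y x) \<and>
     (\<forall>x\<in>{0..1}. \<forall>y\<in>{0..1}. G x y = 0 \<longleftrightarrow> x = 0 \<and> y = 0) \<and>
     (\<forall>x\<in>{0..1}. \<forall>y\<in>{0..1}. G x y = 1 \<longleftrightarrow> x = 1 \<or> y = 1) \<and>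
     (\<forall>x\<in>{0..1}. \<forall>x'\<in>{0..1}. \<forall>y\<in>{0..1}. x \<le> x' \<longrightarrow> G x y \<le> G x' y) \<and>
     (\<forall>x\<in>{0..1}. \<forall>y\<in>{0..1}. \<forall>y'\<in>{0..1}. y \<le> y' \<longrightarrow> G x y \<le> G x y') \<and>
     continuous_on ({0..1} \<times> {0..1}) (\<lambda>(x, y). G x y)"

end

theory Submission
  imports Defs
begin

(* G inherits monotonicity and continuity from s and t, and (G3) holds because t is
   infinite only at 1.  For (G2): t \<ge> a/2 everywhere, so t x + t y \<le> a forces
   t x = t y = a/2, i.e. x = y = 0. *)

lemma ennreal_add_le_double_iff:
  fixes b x y :: ennreal
  assumes "b \<noteq> \<infinity>" "b \<le> x" "b \<le> y"
  shows "x + y \<le> b + b \<longleftrightarrow> x = b \<and> y = b"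
proof
  assume sum_le: "x + y \<le> b + b"
  have "x + b \<le> b + b"
    using sum_le add_left_mono[OF \<open>b \<le> y\<close>, of x] by (rule order.trans[rotated])
  moreover have "b + y \<le> b + b"
    using sum_le add_right_mono[OF \<open>b \<le> x\<close>, of y] by (rule order.trans[rotated])
  ultimately have "x \<le> b" "y \<le> b"
    using \<open>b \<noteq> \<infinity>\<close> by (simp_all add: ennreal_add_left_cancel_le add.commute[of x])
  with assms show "x = b \<and> y = b" by auto
qed simp

lemma mono_on_add_comp_left:
  fixes t :: "'a::order \<Rightarrow> 'b::ordered_ab_semigroup_add" and s :: "'b \<Rightarrow> 'c::order"
  assumes "mono s" "mono_on A t" "x \<in> A" "x' \<in> A" "x \<le> x'"
  shows "s (t x + t y) \<le> s (t x' + t y)"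
  using assms by (intro monoD[OF \<open>mono s\<close>] add_right_mono mono_onD[of A t])

lemma continuous_on_add_comp:
  fixes t :: "'a::topological_space \<Rightarrow> 'b::topological_monoid_add"
    and s :: "'b \<Rightarrow> 'c::topological_space"
  assumes "continuous_on A t" "continuous_on UNIV s"
  shows "continuous_on (A \<times> A) (\<lambda>(x, y). s (t x + t y))"
proof -
  have "continuous_on (A \<times> A) (\<lambda>p. t (fst p) + t (snd p))"
    by (intro continuous_on_add continuous_on_compose2[OF assms(1)] continuous_on_fst
        continuous_on_snd continuous_on_id) auto
  then show ?thesis
    unfolding case_prod_beta by (rule continuous_on_compose2[OF assms(2)]) auto
qed

theorem theorem6p2:
  fixes a :: real and t :: "real \<Rightarrow> ennreal" and s :: "ennreal \<Rightarrow> real"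
  assumes a_nonneg: "0 \<le> a"
    and t_cont: "continuous_on {0..1} t"
    and t_mono: "mono_on {0..1} t"
    and s_cont: "continuous_on UNIV s"
    and s_mono: "mono s"
    and s_range: "\<forall>z. s z \<in> {0..1}"
    and t1: "\<forall>x\<in>{0..1}. t x = \<infinity> \<longleftrightarrow> x = 1"
    and t2: "\<forall>x\<in>{0..1}. t x = ennreal (a / 2) \<longleftrightarrow> x = 0"
    and s3: "\<forall>z. s z = 0 \<longleftrightarrow> z \<le> ennreal a"
    and s4: "\<forall>z. s z = 1 \<longleftrightarrow> z = \<infinity>"
  shows "grouping_function (\<lambda>x y. s (t x + t y))"
proof -
  have t_zero: "t 0 = ennreal (a / 2)"
    using t2 by simp
  have t_ge: "ennreal (a / 2) \<le> t x" if "x \<in> {0..1}" for x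
    using t_zero mono_onD[OF t_mono, of 0 x] that by auto
  have a_double: "ennreal a = ennreal (a / 2) + ennreal (a / 2)"
    using a_nonneg by (simp flip: ennreal_plus)
  have zero_iff: "s (t x + t y) = 0 \<longleftrightarrow> x = 0 \<and> y = 0" if "x \<in> {0..1}" "y \<in> {0..1}" for x y
    using s3 t2 that ennreal_add_le_double_iff[OF _ t_ge t_ge] a_double by auto
  have one_iff: "s (t x + t y) = 1 \<longleftrightarrow> x = 1 \<or> y = 1" if "x \<in> {0..1}" "y \<in> {0..1}" for x y
    using s4 t1 that by auto
  have mono_right: "s (t x + t y) \<le> s (t x + t y')"
    if "x \<in> {0..1}" "y \<in> {0..1}" "y' \<in> {0..1}" "y \<le> y'" for x y y'
    using mono_on_add_comp_left[OF s_mono t_mono that(2-4)] by (simp add: add.commute)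
  show ?thesis
    unfolding grouping_function_def
    using s_range zero_iff one_iff mono_on_add_comp_left[OF s_mono t_mono] mono_right
      continuous_on_add_comp[OF t_cont s_cont]
    by (auto simp: add.commute)
qed

end
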